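(* Fix $0<\epsilon<1$ and $k<m$. Suppose $A\in\mathbb{R}^{m\times n}$ has i.i.d. $\mathcal{N}(0,1/m)$ entries with rows $a_\ell$. Let $T\subset\mathbb{R}^n$ be a $k$-dimensional subspace and $W_0,Z_0$ subsets of $\mathbb{R}^n$. Let $E$ be the event that for all $\Omega\subset[m]$ with $|\Omega|\leqslant2k$, $|\langle\tilde A_{z_0}^\top\tilde A_{w_0}x,y\rangle|\leqslant\epsilon\|x\|\|y\|$ for all $x,y\in T$, $w_0\in W_0$, $z_0\in Z_0$, where $\tilde A_{z_0}^\top\tilde A_{w_0}:=\sum_{\ell\in\Omega}\mathrm{sgn}(\langle a_\ell,z_0\rangle\langle a_\ell,w_0\rangle)a_\ell a_\ell^\top$. Then there exists $\delta_\epsilon>0$ such that if $m\geqslant9\epsilon^{-1}k$ and $2k\leqslant\delta_\epsilon m$, then $\mathbb{P}(E)\geqslant1-2m\exp(-\epsilon m/36)$.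
   Context: $\mathrm{sgn}(0)=0$. *)

theory Defs
  imports "HOL-Probability.Probability"
begin

text \<open>Vectors of R^n are represented as functions nat => real vanishing outside {..<n};
  n is an explicit natural number so that constants may be chosen uniformly in n.\<close>

definition Rn :: "nat \<Rightarrow> (nat \<Rightarrow> real) set" where
  "Rn n = {x. \<forall>j\<ge>n. x j = 0}"

definition ip :: "nat \<Rightarrow> (nat \<Rightarrow> real) \<Rightarrow> (nat \<Rightarrow> real) \<Rightarrow> real" where
  "ip n x y = (\<Sum>j<n. x j * y j)"

definition vnorm :: "nat \<Rightarrow> (nat \<Rightarrow> real) \<Rightarrow> real" where
  "vnorm n x = sqrt (ip n x x)"

definition subspace_of_dim :: "nat \<Rightarrow> nat \<Rightarrow> (nat \<Rightarrow> real) set \<Rightarrow> bool" where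
  "subspace_of_dim n k T \<longleftrightarrow>
     (\<exists>v :: nat \<Rightarrow> nat \<Rightarrow> real.
        (\<forall>i<k. v i \<in> Rn n) \<and>
        (\<forall>c :: nat \<Rightarrow> real. (\<forall>j. (\<Sum>i<k. c i * v i j) = 0) \<longrightarrow> (\<forall>i<k. c i = 0)) \<and>
        T = {x. \<exists>c :: nat \<Rightarrow> real. x = (\<lambda>j. \<Sum>i<k. c i * v i j)})"

text \<open>Probability space of m x n matrices with i.i.d. N(0,1/m) entries
  (normal_density takes the standard deviation).\<close>
definition gauss_mat :: "nat \<Rightarrow> nat \<Rightarrow> (nat \<times> nat \<Rightarrow> real) measure" where
  "gauss_mat m n = PiM ({..<m} \<times> {..<n})
      (\<lambda>_. density lborel (normal_density 0 (1 / sqrt (real m))))"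

definition row :: "nat \<Rightarrow> (nat \<times> nat \<Rightarrow> real) \<Rightarrow> nat \<Rightarrow> nat \<Rightarrow> real" where
  "row n A l = (\<lambda>j. if j < n then A (l, j) else 0)"

definition tAA :: "nat \<Rightarrow> (nat \<times> nat \<Rightarrow> real) \<Rightarrow> nat set \<Rightarrow> (nat \<Rightarrow> real) \<Rightarrow> (nat \<Rightarrow> real)
                   \<Rightarrow> nat \<Rightarrow> nat \<Rightarrow> real" where
  "tAA n A \<Omega> z0 w0 = (\<lambda>i j. \<Sum>l\<in>\<Omega>.
      sgn (ip n (row n A l) z0 * ip n (row n A l) w0) * row n A l i * row n A l j)"

definition mat_vec :: "nat \<Rightarrow> (nat \<Rightarrow> nat \<Rightarrow> real) \<Rightarrow> (nat \<Rightarrow> real) \<Rightarrow> nat \<Rightarrow> real" where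
  "mat_vec n M x = (\<lambda>i. if i < n then (\<Sum>j<n. M i j * x j) else 0)"

definition event_E :: "nat \<Rightarrow> nat \<Rightarrow> nat \<Rightarrow> real \<Rightarrow> (nat \<Rightarrow> real) set \<Rightarrow> (nat \<Rightarrow> real) set
                       \<Rightarrow> (nat \<Rightarrow> real) set \<Rightarrow> (nat \<times> nat \<Rightarrow> real) set" where
  "event_E m n k \<epsilon> T W0 Z0 = {A \<in> space (gauss_mat m n).
      \<forall>\<Omega>. \<Omega> \<subseteq> {..<m} \<and> card \<Omega> \<le> 2 * k \<longrightarrow>
        (\<forall>x\<in>T. \<forall>y\<in>T. \<forall>w0\<in>W0. \<forall>z0\<in>Z0.
           \<bar>ip n (mat_vec n (tAA n A \<Omega> z0 w0) x) y\<bar> \<le> \<epsilon> * vnorm n x * vnorm n y)}"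

end

theory Submission
  imports Defs
begin

(*
  Since the sign weights are bounded by 1, Cauchy-Schwarz reduces the event to the bound
  sum_{l in Omega} <a_l, z>^2 <= eps |z|^2 for z in T and |Omega| <= 2k. Writing z in an
  orthonormal basis u_1, ..., u_k' of T (k' <= k), the left side is the squared norm of the
  Gaussian Omega x k' matrix K_li = <a_l, u_i> applied to the coordinates of z, and the operator
  norm of K is at most twice its maximum over 1/4-nets of the two unit balls. At net points,
  sum_{i,l} c_i w_l K_li is a Gaussian linear form in the entries of A of variance at most 1/m,
  exceeding t = sqrt eps / 2 with probability at most exp (-m t^2 / 2). A union bound over the
  subsets Omega and the at most 48^(3k) pairs of net points, with delta = (eps/100)^2, leaves
  a failure probability below exp (-eps m / 36).
*)

section \<open>Gaussian linear forms\<close>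

lemma normal_density_mult_exp:
  assumes "\<sigma> > 0"
  shows "normal_density 0 \<sigma> x * exp (a * x) =
         exp (a\<^sup>2 * \<sigma>\<^sup>2 / 2) * normal_density (a * \<sigma>\<^sup>2) \<sigma> x"
proof -
  have "-(x - 0)\<^sup>2 / (2 * \<sigma>\<^sup>2) + a * x = a\<^sup>2 * \<sigma>\<^sup>2 / 2 + (-(x - a * \<sigma>\<^sup>2)\<^sup>2 / (2 * \<sigma>\<^sup>2))"
    using assms by (simp add: field_simps power2_eq_square)
  then show ?thesis
    unfolding normal_density_def by (simp add: exp_add[symmetric] mult.commute mult.left_commute)
qed

lemma nn_integral_exp_normal_density:
  assumes "\<sigma> > 0"
  shows "(\<integral>\<^sup>+x. ennreal (exp (a * x)) \<partial>density lborel (normal_density 0 \<sigma>)) =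
         ennreal (exp (a\<^sup>2 * \<sigma>\<^sup>2 / 2))"
proof -
  have "(\<integral>\<^sup>+x. ennreal (exp (a * x)) \<partial>density lborel (normal_density 0 \<sigma>)) =
        (\<integral>\<^sup>+x. ennreal (exp (a\<^sup>2 * \<sigma>\<^sup>2 / 2)) * ennreal (normal_density (a * \<sigma>\<^sup>2) \<sigma> x) \<partial>lborel)"
    using normal_density_mult_exp[OF assms]
    by (subst nn_integral_density) (auto simp: ennreal_mult[symmetric])
  also have "\<dots> = ennreal (exp (a\<^sup>2 * \<sigma>\<^sup>2 / 2)) *
                   (\<integral>\<^sup>+x. ennreal (normal_density (a * \<sigma>\<^sup>2) \<sigma> x) \<partial>lborel)"
    by (subst nn_integral_cmult) auto
  also have "(\<integral>\<^sup>+x. ennreal (normal_density (a * \<sigma>\<^sup>2) \<sigma> x) \<partial>lborel) = 1"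
    using assms
    by (subst nn_integral_eq_integral) auto
  finally show ?thesis by simp
qed

lemma prob_space_gauss_mat: "prob_space (gauss_mat m n)"
  unfolding gauss_mat_def by (intro prob_space_PiM prob_space_normal_density) auto

lemma borel_measurable_gauss_mat_linear_form:
  "(\<lambda>A. \<Sum>p\<in>{..<m}\<times>{..<n}. C p * A p) \<in> borel_measurable (gauss_mat m n)"
proof -
  have "(\<lambda>A. A p) \<in> borel_measurable (gauss_mat m n)" if "p \<in> {..<m} \<times> {..<n}" for p
  proof -
    have "(\<lambda>A. A p) \<in> measurable (gauss_mat m n) (density lborel (normal_density 0 (1 / sqrt m)))"
      unfolding gauss_mat_def using that by (rule measurable_component_singleton)
    then show ?thesis by (simp add: measurable_cong_sets[OF refl sets_density])
  qed
  then show ?thesis by (intro borel_measurable_sum borel_measurable_times) auto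
qed

lemma nn_integral_exp_gauss_mat_linear_form:
  assumes "m > 0"
  shows "(\<integral>\<^sup>+A. ennreal (exp (\<Sum>p\<in>{..<m}\<times>{..<n}. C p * A p)) \<partial>gauss_mat m n) =
         ennreal (exp ((\<Sum>p\<in>{..<m}\<times>{..<n}. (C p)\<^sup>2) / (2 * real m)))"
proof -
  define I where "I = {..<m} \<times> {..<n}"
  define \<sigma> where "\<sigma> = 1 / sqrt (real m)"
  define N where "N = density lborel (normal_density 0 \<sigma>)"
  have \<sigma>: "\<sigma> > 0" "\<sigma>\<^sup>2 = 1 / real m" using assms by (auto simp: \<sigma>_def power_divide)
  interpret N: prob_space N unfolding N_def by (rule prob_space_normal_density[OF \<sigma>(1)])
  interpret product_sigma_finite "\<lambda>_. N" by standard
  have "(\<integral>\<^sup>+A. ennreal (exp (\<Sum>p\<in>I. C p * A p)) \<partial>gauss_mat m n) =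
        (\<integral>\<^sup>+A. (\<Prod>p\<in>I. ennreal (exp (C p * A p))) \<partial>PiM I (\<lambda>_. N))"
    by (simp add: gauss_mat_def I_def N_def \<sigma>_def exp_sum prod_ennreal)
  also have "\<dots> = (\<Prod>p\<in>I. \<integral>\<^sup>+x. ennreal (exp (C p * x)) \<partial>N)"
    by (rule product_nn_integral_prod) (auto simp: I_def N_def)
  also have "\<dots> = (\<Prod>p\<in>I. ennreal (exp ((C p)\<^sup>2 * \<sigma>\<^sup>2 / 2)))"
    unfolding N_def by (simp only: nn_integral_exp_normal_density[OF \<sigma>(1)])
  also have "\<dots> = ennreal (exp (\<Sum>p\<in>I. (C p)\<^sup>2 * \<sigma>\<^sup>2 / 2))"
    by (simp add: prod_ennreal exp_sum I_def)
  also have "(\<Sum>p\<in>I. (C p)\<^sup>2 * \<sigma>\<^sup>2 / 2) = (\<Sum>p\<in>I. (C p)\<^sup>2) / (2 * real m)"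
    by (simp add: \<sigma>(2) sum_divide_distrib mult.commute)
  finally show ?thesis unfolding I_def .
qed

lemma gauss_mat_linear_form_tail:
  assumes m: "m > 0" and C: "(\<Sum>p\<in>{..<m}\<times>{..<n}. (C p)\<^sup>2) \<le> 1" and t: "t > 0"
  shows "measure (gauss_mat m n) {A \<in> space (gauss_mat m n). t \<le> (\<Sum>p\<in>{..<m}\<times>{..<n}. C p * A p)}
         \<le> exp (- real m * t\<^sup>2 / 2)"
proof -
  define M where "M = gauss_mat m n"
  define S where "S A = (\<Sum>p\<in>{..<m}\<times>{..<n}. C p * A p)" for A :: "nat \<times> nat \<Rightarrow> real"
  define s where "s = real m * t"
  interpret prob_space M unfolding M_def by (rule prob_space_gauss_mat)
  have [measurable]: "S \<in> borel_measurable M"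
    unfolding S_def M_def by (rule borel_measurable_gauss_mat_linear_form)
  have "emeasure M {A \<in> space M. t \<le> S A} \<le>
        ennreal (exp (- s * t)) * (\<integral>\<^sup>+A. ennreal (exp (s * S A)) * indicator (space M) A \<partial>M)"
    using m t by (intro Chernoff_ineq_nn_integral_ge) (auto simp: s_def)
  also have "(\<integral>\<^sup>+A. ennreal (exp (s * S A)) * indicator (space M) A \<partial>M) =
             (\<integral>\<^sup>+A. ennreal (exp (\<Sum>p\<in>{..<m}\<times>{..<n}. (s * C p) * A p)) \<partial>M)"
    by (intro nn_integral_cong) (simp add: S_def sum_distrib_left mult.assoc)
  also have "\<dots> = ennreal (exp ((\<Sum>p\<in>{..<m}\<times>{..<n}. (s * C p)\<^sup>2) / (2 * real m)))"
    unfolding M_def by (rule nn_integral_exp_gauss_mat_linear_form[OF m])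
  also have "ennreal (exp (- s * t)) * \<dots> \<le> ennreal (exp (- real m * t\<^sup>2 / 2))"
  proof -
    have "(\<Sum>p\<in>{..<m}\<times>{..<n}. (s * C p)\<^sup>2) \<le> s\<^sup>2"
      using mult_left_mono[OF C, of "s\<^sup>2"] by (simp add: power_mult_distrib sum_distrib_left)
    then have "- s * t + (\<Sum>p\<in>{..<m}\<times>{..<n}. (s * C p)\<^sup>2) / (2 * real m) \<le>
               - s * t + s\<^sup>2 / (2 * real m)"
      using m by (intro add_left_mono divide_right_mono) auto
    also have "\<dots> = - real m * t\<^sup>2 / 2"
      using m by (simp add: s_def field_simps power2_eq_square)
    finally show ?thesis by (simp add: ennreal_mult[symmetric] exp_add[symmetric])
  qed
  finally have "ennreal (measure M {A \<in> space M. t \<le> S A}) \<le> ennreal (exp (- real m * t\<^sup>2 / 2))"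
    by (simp add: emeasure_eq_measure)
  then show ?thesis by (simp add: M_def S_def)
qed

lemma gauss_mat_finite_linear_forms_tail:
  assumes m: "m > 0" and F: "finite F" and t: "t > 0"
    and C: "\<forall>C\<in>F. (\<Sum>p\<in>{..<m}\<times>{..<n}. (C p)\<^sup>2) \<le> 1"
  defines "B \<equiv> {A \<in> space (gauss_mat m n). \<exists>C\<in>F. t \<le> (\<Sum>p\<in>{..<m}\<times>{..<n}. C p * A p)}"
  shows "B \<in> sets (gauss_mat m n)"
    and "measure (gauss_mat m n) B \<le> real (card F) * exp (- real m * t\<^sup>2 / 2)"
proof -
  define B' where "B' C = {A \<in> space (gauss_mat m n). t \<le> (\<Sum>p\<in>{..<m}\<times>{..<n}. C p * A p)}" for C
  have B': "B' C \<in> sets (gauss_mat m n)" for C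
    using borel_measurable_gauss_mat_linear_form[of C m n] unfolding B'_def by measurable
  have B: "B = (\<Union>C\<in>F. B' C)" unfolding B_def B'_def by auto
  show "B \<in> sets (gauss_mat m n)" unfolding B using F B' by auto
  have "measure (gauss_mat m n) B \<le> (\<Sum>C\<in>F. measure (gauss_mat m n) (B' C))"
    unfolding B using F B' by (intro measure_UNION_le) auto
  also have "\<dots> \<le> (\<Sum>C\<in>F. exp (- real m * t\<^sup>2 / 2))"
    unfolding B'_def using gauss_mat_linear_form_tail[OF m _ t] C by (intro sum_mono) auto
  finally show "measure (gauss_mat m n) B \<le> real (card F) * exp (- real m * t\<^sup>2 / 2)" by simp
qed

section \<open>Orthonormal bases of subspaces\<close>

lemma ip_commute: "ip n x y = ip n y x"
  unfolding ip_def by (simp add: mult.commute)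

lemma ip_sum_left: "ip n (\<lambda>j. \<Sum>i\<in>A. c i * u i j) y = (\<Sum>i\<in>A. c i * ip n (u i) y)"
  unfolding ip_def by (simp add: sum_distrib_right sum_distrib_left mult_ac sum.swap[of _ A])

lemma ip_sum_right: "ip n y (\<lambda>j. \<Sum>i\<in>A. c i * u i j) = (\<Sum>i\<in>A. c i * ip n y (u i))"
  unfolding ip_def by (simp add: sum_distrib_right sum_distrib_left mult_ac sum.swap[of _ A])

lemma ip_diff_left: "ip n (\<lambda>j. x j - y j) z = ip n x z - ip n y z"
  unfolding ip_def by (simp add: left_diff_distrib sum_subtractf)

lemma ip_self_nonneg: "ip n x x \<ge> 0"
  unfolding ip_def by (simp add: sum_nonneg)

lemma ip_self_eq_0_iff:
  assumes "x \<in> Rn n"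
  shows "ip n x x = 0 \<longleftrightarrow> x = (\<lambda>j. 0)"
  using assms unfolding ip_def Rn_def
  by (auto simp: sum_nonneg_eq_0_iff fun_eq_iff) (metis lessThan_iff not_le)

definition lin_span :: "nat \<Rightarrow> (nat \<Rightarrow> nat \<Rightarrow> real) \<Rightarrow> (nat \<Rightarrow> real) set" where
  "lin_span k v = {x. \<exists>c. x = (\<lambda>j. \<Sum>i<k. c i * v i j)}"

definition orthonormal :: "nat \<Rightarrow> nat \<Rightarrow> (nat \<Rightarrow> nat \<Rightarrow> real) \<Rightarrow> bool" where
  "orthonormal n k u \<longleftrightarrow>
     (\<forall>i<k. u i \<in> Rn n) \<and> (\<forall>i<k. \<forall>i'<k. ip n (u i) (u i') = (if i = i' then 1 else 0))"

lemma ip_lin_comb_orthonormal: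
  assumes "orthonormal n k u" "i < k"
  shows "ip n (\<lambda>j. \<Sum>i'<k. c i' * u i' j) (u i) = c i"
proof -
  have "ip n (\<lambda>j. \<Sum>i'<k. c i' * u i' j) (u i) = (\<Sum>i'<k. c i' * ip n (u i') (u i))"
    by (rule ip_sum_left)
  also have "\<dots> = (\<Sum>i'<k. if i' = i then c i else 0)"
    using assms unfolding orthonormal_def by (intro sum.cong) auto
  also have "\<dots> = c i" using assms(2) by simp
  finally show ?thesis .
qed

lemma ip_self_lin_comb_orthonormal:
  assumes "orthonormal n k u"
  shows "ip n (\<lambda>j. \<Sum>i<k. c i * u i j) (\<lambda>j. \<Sum>i<k. c i * u i j) = (\<Sum>i<k. (c i)\<^sup>2)"
  using ip_lin_comb_orthonormal[OF assms] by (simp add: ip_sum_right power2_eq_square)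

lemma lin_span_subset:
  assumes "\<And>i. i < k \<Longrightarrow> v i \<in> lin_span k' u"
  shows "lin_span k v \<subseteq> lin_span k' u"
proof
  fix x assume "x \<in> lin_span k v"
  then obtain c where x: "x = (\<lambda>j. \<Sum>i<k. c i * v i j)" unfolding lin_span_def by blast
  have "\<forall>i\<in>{..<k}. \<exists>e. v i = (\<lambda>j. \<Sum>i'<k'. e i' * u i' j)"
    using assms unfolding lin_span_def by blast
  then obtain d where d: "\<And>i. i < k \<Longrightarrow> v i = (\<lambda>j. \<Sum>i'<k'. d i i' * u i' j)"
    by (auto dest!: bchoice)
  have "x j = (\<Sum>i'<k'. (\<Sum>i<k. c i * d i i') * u i' j)" for j
  proof -
    have "x j = (\<Sum>i<k. c i * (\<Sum>i'<k'. d i i' * u i' j))"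
      unfolding x by (intro sum.cong refl) (simp add: d)
    also have "\<dots> = (\<Sum>i'<k'. (\<Sum>i<k. c i * d i i') * u i' j)"
      by (simp add: sum_distrib_left sum_distrib_right sum.swap[of _ "{..<k}"] mult_ac)
    finally show ?thesis .
  qed
  then show "x \<in> lin_span k' u"
    unfolding lin_span_def by (auto intro!: exI[of _ "\<lambda>i'. \<Sum>i<k. c i * d i i'"])
qed

lemma orthonormal_fun_upd:
  assumes "orthonormal n k u" "w \<in> Rn n" "ip n w w = 1" "\<And>i. i < k \<Longrightarrow> ip n w (u i) = 0"
  shows "orthonormal n (Suc k) (u(k := w))"
proof -
  have "ip n (u i) w = 0" if "i < k" for i
    using assms(4)[OF that] by (simp add: ip_commute)
  then show ?thesis
    using assms unfolding orthonormal_def by (auto simp: less_Suc_eq)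
qed

lemma lin_span_fun_upd:
  assumes "x \<in> lin_span k u"
  shows "(\<lambda>j. x j + a * w j) \<in> lin_span (Suc k) (u(k := w))"
proof -
  obtain c where x: "x = (\<lambda>j. \<Sum>i<k. c i * u i j)" using assms unfolding lin_span_def by blast
  have "(\<Sum>i<k. (c(k := a)) i * (u(k := w)) i j) = (\<Sum>i<k. c i * u i j)" for j
    by (intro sum.cong) auto
  then have "(\<lambda>j. x j + a * w j) = (\<lambda>j. \<Sum>i<Suc k. (c(k := a)) i * (u(k := w)) i j)"
    unfolding x by simp
  then show ?thesis unfolding lin_span_def by blast
qed

lemma orthonormal_extend:
  assumes u: "orthonormal n k u" and v: "v \<in> Rn n"
  obtains k' u' where "k' \<le> Suc k" "orthonormal n k' u'"
    "lin_span k u \<subseteq> lin_span k' u'" "v \<in> lin_span k' u'"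
proof -
  define p where "p = (\<lambda>j. \<Sum>i<k. ip n v (u i) * u i j)"
  define w where "w = (\<lambda>j. v j - p j)"
  have p: "p \<in> lin_span k u"
    unfolding lin_span_def p_def by (intro CollectI exI[of _ "\<lambda>i. ip n v (u i)"]) (rule refl)
  have w_orth: "ip n w (u i) = 0" if "i < k" for i
    using ip_lin_comb_orthonormal[OF u that] by (simp add: w_def p_def ip_diff_left)
  have w: "w \<in> Rn n" using u v unfolding w_def p_def orthonormal_def Rn_def by auto
  show ?thesis
  proof (cases "ip n w w = 0")
    case True
    then have "v = p" using ip_self_eq_0_iff[OF w] by (simp add: w_def fun_eq_iff)
    then show ?thesis using that[of k u] u p by auto
  next
    case False
    define r where "r = sqrt (ip n w w)"
    have r: "r > 0" "r\<^sup>2 = ip n w w" using False ip_self_nonneg[of n w] by (auto simp: r_def)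
    define e where "e = (\<lambda>j. w j / r)"
    have "ip n e e = ip n w w / r\<^sup>2"
      unfolding e_def ip_def by (simp add: sum_divide_distrib[symmetric] power2_eq_square)
    then have "ip n e e = 1" using r False by simp
    moreover have "ip n e (u i) = 0" if "i < k" for i
      using w_orth[OF that] unfolding e_def ip_def by (simp add: sum_divide_distrib[symmetric])
    moreover have "e \<in> Rn n" using w unfolding e_def Rn_def by auto
    ultimately have "orthonormal n (Suc k) (u(k := e))" by (intro orthonormal_fun_upd[OF u])
    moreover have "lin_span k u \<subseteq> lin_span (Suc k) (u(k := e))"
      using lin_span_fun_upd[where a = 0] by auto
    moreover have "v = (\<lambda>j. p j + r * e j)" using r by (simp add: e_def w_def)
    then have "v \<in> lin_span (Suc k) (u(k := e))" using lin_span_fun_upd[OF p] by simp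
    ultimately show ?thesis using that[of "Suc k"] by blast
  qed
qed

lemma gram_schmidt:
  assumes "\<And>i. i < k \<Longrightarrow> v i \<in> Rn n"
  obtains k' u where "k' \<le> k" "orthonormal n k' u" "lin_span k v \<subseteq> lin_span k' u"
proof -
  have "\<exists>k' u. k' \<le> k \<and> orthonormal n k' u \<and> (\<forall>i<k. v i \<in> lin_span k' u)"
    using assms
  proof (induction k)
    case 0
    show ?case by (rule exI[of _ 0]) (auto simp: orthonormal_def)
  next
    case (Suc k)
    then obtain k' u where "k' \<le> k" "orthonormal n k' u" "\<forall>i<k. v i \<in> lin_span k' u"
      by auto
    moreover obtain k'' u' where "k'' \<le> Suc k'" "orthonormal n k'' u'"
      "lin_span k' u \<subseteq> lin_span k'' u'" "v k \<in> lin_span k'' u'"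
      using orthonormal_extend[OF \<open>orthonormal n k' u\<close>] Suc.prems by blast
    ultimately show ?case by (intro exI[of _ k''] exI[of _ u']) (auto simp: less_Suc_eq)
  qed
  then obtain k' u where "k' \<le> k" "orthonormal n k' u" "\<forall>i<k. v i \<in> lin_span k' u"
    by blast
  then show ?thesis using that[of k' u] lin_span_subset[of k v k' u] by blast
qed

lemma subspace_of_dim_orthonormal:
  assumes "subspace_of_dim n k T"
  obtains k' u where "k' \<le> k" "orthonormal n k' u" "T \<subseteq> lin_span k' u"
proof -
  obtain v where "\<And>i. i < k \<Longrightarrow> v i \<in> Rn n" "T = lin_span k v"
    using assms unfolding subspace_of_dim_def lin_span_def by blast
  then show ?thesis using gram_schmidt[of k v n] that by blast
qed

section \<open>Nets of the unit ball\<close>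

definition unit_ball_on :: "'a set \<Rightarrow> ('a \<Rightarrow> real) set" where
  "unit_ball_on I = {c. (\<Sum>i\<in>I. (c i)\<^sup>2) \<le> 1}"

lemma abs_le_1_if_unit_ball_on:
  assumes "finite I" "i \<in> I" "c \<in> unit_ball_on I"
  shows "\<bar>c i\<bar> \<le> 1"
proof -
  have "(c i)\<^sup>2 \<le> (\<Sum>i\<in>I. (c i)\<^sup>2)" using assms by (intro member_le_sum) auto
  then have "(c i)\<^sup>2 \<le> 1" using assms(3) by (simp add: unit_ball_on_def)
  then show ?thesis by (simp add: abs_square_le_1)
qed

lemma sum_abs_le_sqrt_card_if_unit_ball_on:
  assumes "c \<in> unit_ball_on I"
  shows "(\<Sum>i\<in>I. \<bar>c i\<bar>) \<le> sqrt (card I)"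
proof (rule real_le_rsqrt)
  have "(\<Sum>i\<in>I. \<bar>c i\<bar> * 1)\<^sup>2 \<le> (\<Sum>i\<in>I. \<bar>c i\<bar>\<^sup>2) * (\<Sum>i\<in>I. 1\<^sup>2)"
    by (rule Cauchy_Schwarz_ineq_sum)
  also have "\<dots> \<le> card I" using assms by (simp add: unit_ball_on_def mult_left_le_one_le sum_nonneg)
  finally show "(\<Sum>i\<in>I. \<bar>c i\<bar>)\<^sup>2 \<le> card I" by simp
qed

definition l1_lattice :: "'a set \<Rightarrow> nat \<Rightarrow> ('a \<Rightarrow> int) set" where
  "l1_lattice I N = {z \<in> PiE I (\<lambda>_. {-int N..int N}). (\<Sum>i\<in>I. nat \<bar>z i\<bar>) \<le> N}"

lemma finite_l1_lattice: "finite I \<Longrightarrow> finite (l1_lattice I N)"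
  unfolding l1_lattice_def
  by (rule finite_subset[of _ "PiE I (\<lambda>_. {-int N..int N})"]) (auto intro: finite_PiE)

lemma sum_half_power_abs: "(\<Sum>j\<in>{-int N..int N}. (1/2::real) ^ nat \<bar>j\<bar>) = 3 - 2 * (1/2) ^ N"
proof (induction N)
  case (Suc N)
  have "{-int (Suc N)..int (Suc N)} = insert (int (Suc N)) (insert (- int (Suc N)) {-int N..int N})"
    by auto
  then show ?case using Suc by (simp add: nat_add_distrib)
qed simp

text \<open>Each lattice point z has weight (1/2)^|z|_1 >= 2^-N, and the weights of the whole box
  {-N..N}^I sum to less than 3^|I|.\<close>
lemma card_l1_lattice_le:
  assumes "finite I"
  shows "real (card (l1_lattice I N)) \<le> 2 ^ N * 3 ^ card I"
proof -
  let ?P = "PiE I (\<lambda>_. {-int N..int N})"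
  let ?w = "\<lambda>z. (\<Prod>i\<in>I. (1/2::real) ^ nat \<bar>z i\<bar>)"
  have "real (card (l1_lattice I N)) = (\<Sum>z\<in>l1_lattice I N. 1)" by simp
  also have "\<dots> \<le> (\<Sum>z\<in>l1_lattice I N. 2 ^ N * ?w z)"
  proof (rule sum_mono)
    fix z assume z: "z \<in> l1_lattice I N"
    have "(1/2::real) ^ N \<le> (1/2) ^ (\<Sum>i\<in>I. nat \<bar>z i\<bar>)"
      using z unfolding l1_lattice_def by (intro power_decreasing) auto
    then have "2 ^ N * (1/2::real) ^ N \<le> 2 ^ N * ?w z" by (simp add: power_sum)
    then show "1 \<le> 2 ^ N * ?w z" by (simp add: power_mult_distrib[symmetric])
  qed
  also have "\<dots> \<le> (\<Sum>z\<in>?P. 2 ^ N * ?w z)"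
    using assms by (intro sum_mono2 finite_PiE)
      (auto simp: l1_lattice_def intro!: mult_nonneg_nonneg prod_nonneg)
  also have "\<dots> = 2 ^ N * (\<Prod>i\<in>I. \<Sum>j\<in>{-int N..int N}. (1/2::real) ^ nat \<bar>j\<bar>)"
    using prod_sum_PiE[OF assms, of "\<lambda>_. {-int N..int N}" "\<lambda>_ j. (1/2::real) ^ nat \<bar>j\<bar>"]
    by (simp add: sum_distrib_left)
  also have "\<dots> \<le> 2 ^ N * (\<Prod>i\<in>I. 3)"
    unfolding sum_half_power_abs using power_le_one[of "1/2::real" N]
    by (intro mult_left_mono prod_mono) auto
  finally show ?thesis by simp
qed

lemma l1_latticeI:
  assumes "finite I" "z \<in> extensional I" "(\<Sum>i\<in>I. \<bar>of_int (z i)\<bar>) \<le> real N"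
  shows "z \<in> l1_lattice I N"
proof -
  have "real_of_int \<bar>z i\<bar> \<le> real_of_int (int N)" if "i \<in> I" for i
    using assms(3) member_le_sum[of i I "\<lambda>i. \<bar>of_int (z i)\<bar> :: real"] that assms(1) by auto
  then have "\<bar>z i\<bar> \<le> int N" if "i \<in> I" for i
    using that of_int_le_iff by blast
  moreover have "real (\<Sum>i\<in>I. nat \<bar>z i\<bar>) \<le> real N"
    using assms(3) by simp
  then have "(\<Sum>i\<in>I. nat \<bar>z i\<bar>) \<le> N"
    using of_nat_le_iff by blast
  ultimately show ?thesis
    using assms(2) unfolding l1_lattice_def by (force simp: abs_le_iff PiE_def)
qed

definition round_to_zero :: "real \<Rightarrow> int" where
  "round_to_zero x = (if x \<ge> 0 then \<lfloor>x\<rfloor> else - \<lfloor>- x\<rfloor>)"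

lemma abs_round_to_zero_le: "\<bar>of_int (round_to_zero x)\<bar> \<le> \<bar>x\<bar>"
  unfolding round_to_zero_def by auto

lemma abs_sub_round_to_zero_le: "\<bar>x - of_int (round_to_zero x)\<bar> \<le> 1"
  unfolding round_to_zero_def by auto linarith+

text \<open>Restricting the integer
  coordinates to l1_lattice I (4 d) keeps every rounding of a unit vector towards zero (by
  Cauchy-Schwarz) and bounds the number of points by 2^(4d) 3^d = 48^d.\<close>
definition unit_ball_net :: "'a set \<Rightarrow> ('a \<Rightarrow> real) set" where
  "unit_ball_net I = unit_ball_on I \<inter>
     (\<lambda>z i. if i \<in> I then of_int (z i) / (4 * sqrt (card I)) else 0) ` l1_lattice I (4 * card I)"

lemma unit_ball_net_subset: "unit_ball_net I \<subseteq> unit_ball_on I"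
  unfolding unit_ball_net_def by blast

lemma finite_unit_ball_net: "finite I \<Longrightarrow> finite (unit_ball_net I)"
  unfolding unit_ball_net_def using finite_l1_lattice by blast

lemma card_unit_ball_net_le:
  assumes "finite I"
  shows "real (card (unit_ball_net I)) \<le> 48 ^ card I"
proof -
  have "real (card (unit_ball_net I)) \<le> card (l1_lattice I (4 * card I))"
    unfolding unit_ball_net_def using finite_l1_lattice[OF assms]
    by (intro of_nat_mono order_trans[OF card_mono card_image_le]) auto
  also have "\<dots> \<le> 2 ^ (4 * card I) * 3 ^ card I" by (rule card_l1_lattice_le[OF assms])
  also have "\<dots> = 48 ^ card I" by (simp add: power_mult power_mult_distrib[symmetric])
  finally show ?thesis .
qed

lemma unit_ball_net_approx:
  assumes I: "finite I" and c: "c \<in> unit_ball_on I"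
  shows "\<exists>w\<in>unit_ball_net I. (\<Sum>i\<in>I. (c i - w i)\<^sup>2) \<le> 1/16"
proof -
  define q where "q = 4 * sqrt (card I)"
  define z where "z = restrict (\<lambda>i. round_to_zero (q * c i)) I"
  define w where "w i = (if i \<in> I then of_int (z i) / q else 0)" for i
  have q: "q > 0" if "i \<in> I" for i
    using that I by (auto simp: q_def card_gt_0_iff)
  have w_abs: "\<bar>w i\<bar> \<le> \<bar>c i\<bar>" if "i \<in> I" for i
    using abs_round_to_zero_le[of "q * c i"] q[OF that] that
    by (simp add: w_def z_def abs_mult divide_le_eq mult.commute)
  have "(\<Sum>i\<in>I. \<bar>of_int (z i)\<bar>) \<le> (\<Sum>i\<in>I. q * \<bar>c i\<bar>)"
  proof (rule sum_mono)
    fix i assume "i \<in> I"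
    then show "\<bar>of_int (z i)\<bar> \<le> q * \<bar>c i\<bar>"
      using abs_round_to_zero_le[of "q * c i"] q[of i] by (simp add: z_def abs_mult)
  qed
  also have "\<dots> = q * (\<Sum>i\<in>I. \<bar>c i\<bar>)" by (simp add: sum_distrib_left)
  also have "\<dots> \<le> q * sqrt (card I)"
    by (intro mult_left_mono sum_abs_le_sqrt_card_if_unit_ball_on[OF c]) (simp add: q_def)
  also have "\<dots> = 4 * real (card I)" by (simp add: q_def)
  finally have z_l1: "(\<Sum>i\<in>I. \<bar>of_int (z i)\<bar>) \<le> 4 * real (card I)" .
  have "z \<in> l1_lattice I (4 * card I)"
    using I z_l1 by (intro l1_latticeI) (auto simp: z_def)
  moreover have "w \<in> unit_ball_on I"
    using c w_abs unfolding unit_ball_on_def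
    by (simp add: abs_le_square_iff) (meson order_trans sum_mono)
  ultimately have "w \<in> unit_ball_net I"
    unfolding unit_ball_net_def w_def q_def by (auto intro: image_eqI[of _ _ z])
  moreover have "(\<Sum>i\<in>I. (c i - w i)\<^sup>2) \<le> (\<Sum>i\<in>I. 1 / (16 * real (card I)))"
  proof (rule sum_mono)
    fix i assume i: "i \<in> I"
    have "(c i - w i)\<^sup>2 = (q * c i - of_int (round_to_zero (q * c i)))\<^sup>2 / q\<^sup>2"
      using q[OF i] i by (simp add: w_def z_def field_simps)
    also have "\<dots> \<le> 1 / q\<^sup>2"
      using abs_sub_round_to_zero_le[of "q * c i"]
      by (intro divide_right_mono) (auto simp: abs_square_le_1)
    finally show "(c i - w i)\<^sup>2 \<le> 1 / (16 * real (card I))" by (simp add: q_def power_mult_distrib)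
  qed
  moreover have "(\<Sum>i\<in>I. 1 / (16 * real (card I))) \<le> 1/16" by simp
  ultimately show ?thesis by (blast intro: order_trans)
qed

lemma bdd_above_bilinear_unit_balls:
  fixes K :: "'a \<Rightarrow> 'b \<Rightarrow> real"
  assumes I: "finite I" and J: "finite J"
  shows "bdd_above ((\<lambda>(c, v). \<Sum>i\<in>I. \<Sum>l\<in>J. c i * v l * K i l) ` (unit_ball_on I \<times> unit_ball_on J))"
proof (rule bdd_aboveI)
  fix x assume "x \<in> (\<lambda>(c, v). \<Sum>i\<in>I. \<Sum>l\<in>J. c i * v l * K i l) ` (unit_ball_on I \<times> unit_ball_on J)"
  then obtain c v where c: "c \<in> unit_ball_on I" and v: "v \<in> unit_ball_on J"
    and x: "x = (\<Sum>i\<in>I. \<Sum>l\<in>J. c i * v l * K i l)"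
    by auto
  have "x \<le> (\<Sum>i\<in>I. \<Sum>l\<in>J. \<bar>c i * v l * K i l\<bar>)"
    unfolding x by (intro sum_mono) auto
  also have "\<dots> \<le> (\<Sum>i\<in>I. \<Sum>l\<in>J. \<bar>K i l\<bar>)"
  proof (intro sum_mono)
    fix i l assume "i \<in> I" "l \<in> J"
    then have "\<bar>c i\<bar> * \<bar>v l\<bar> \<le> 1"
      using abs_le_1_if_unit_ball_on[OF I _ c] abs_le_1_if_unit_ball_on[OF J _ v]
      by (simp add: mult_le_one)
    then show "\<bar>c i * v l * K i l\<bar> \<le> \<bar>K i l\<bar>"
      by (simp add: abs_mult mult_left_le_one_le)
  qed
  finally show "x \<le> (\<Sum>i\<in>I. \<Sum>l\<in>J. \<bar>K i l\<bar>)" .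
qed

text \<open>The standard 1/4-net argument: if M is the supremum of the form over the product of the
  unit balls, splitting (c, v) into a net point plus two errors of norm at most 1/4 gives
  M \<le> t + M/4 + M/4.\<close>
lemma bilinear_le_of_le_on_nets:
  fixes K :: "'a \<Rightarrow> 'b \<Rightarrow> real"
  assumes I: "finite I" and J: "finite J"
    and net: "\<And>c v. c \<in> unit_ball_net I \<Longrightarrow> v \<in> unit_ball_net J \<Longrightarrow>
                (\<Sum>i\<in>I. \<Sum>l\<in>J. c i * v l * K i l) \<le> t"
    and c: "c \<in> unit_ball_on I" and v: "v \<in> unit_ball_on J"
  shows "(\<Sum>i\<in>I. \<Sum>l\<in>J. c i * v l * K i l) \<le> 2 * t"
proof -
  define F where "F c v = (\<Sum>i\<in>I. \<Sum>l\<in>J. c i * v l * K i l)" for c v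
  define S where "S = case_prod F ` (unit_ball_on I \<times> unit_ball_on J)"
  define M where "M = Sup S"
  have "bdd_above S"
    unfolding S_def F_def using bdd_above_bilinear_unit_balls[OF I J] .
  then have le_M: "F c v \<le> M" if "c \<in> unit_ball_on I" "v \<in> unit_ball_on J" for c v
    unfolding M_def using that by (intro cSup_upper) (auto simp: S_def)
  have sum_sq_scale: "(\<Sum>i\<in>A. (4 * x i)\<^sup>2) = 16 * (\<Sum>i\<in>A. (x i)\<^sup>2)"
    for A :: "'c set" and x :: "'c \<Rightarrow> real"
    by (simp add: power_mult_distrib sum_distrib_left)
  have le_M_left: "F c v \<le> M / 4" if "(\<Sum>i\<in>I. (c i)\<^sup>2) \<le> 1/16" "v \<in> unit_ball_on J" for c v
    using le_M[of "\<lambda>i. 4 * c i" v] that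
    by (simp add: unit_ball_on_def sum_sq_scale F_def sum_distrib_left mult_ac)
  have le_M_right: "F c v \<le> M / 4" if "c \<in> unit_ball_on I" "(\<Sum>l\<in>J. (v l)\<^sup>2) \<le> 1/16" for c v
    using le_M[of c "\<lambda>l. 4 * v l"] that
    by (simp add: unit_ball_on_def sum_sq_scale F_def sum_distrib_left mult_ac)
  have approx: "F c v \<le> t + M / 2" if c: "c \<in> unit_ball_on I" and v: "v \<in> unit_ball_on J" for c v
  proof -
    obtain c' where c': "c' \<in> unit_ball_net I" "(\<Sum>i\<in>I. (c i - c' i)\<^sup>2) \<le> 1/16"
      using unit_ball_net_approx[OF I c] by blast
    obtain v' where v': "v' \<in> unit_ball_net J" "(\<Sum>l\<in>J. (v l - v' l)\<^sup>2) \<le> 1/16"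
      using unit_ball_net_approx[OF J v] by blast
    have "F c v = F c' v' + F (\<lambda>i. c i - c' i) v + F c' (\<lambda>l. v l - v' l)"
      unfolding F_def by (simp add: sum.distrib[symmetric] algebra_simps)
    also have "\<dots> \<le> t + M / 4 + M / 4"
      using net[OF c'(1) v'(1)] le_M_left[OF c'(2) v]
        le_M_right[OF subsetD[OF unit_ball_net_subset c'(1)] v'(2)]
      unfolding F_def by linarith
    finally show ?thesis by simp
  qed
  have "(\<lambda>_. 0, \<lambda>_. 0) \<in> unit_ball_on I \<times> unit_ball_on J" by (simp add: unit_ball_on_def)
  then have "Sup S \<le> t + M / 2"
    using approx unfolding S_def by (intro cSup_least) auto
  then have "M \<le> t + M / 2" by (simp add: M_def)
  then show ?thesis using le_M[OF c v] unfolding F_def by simp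
qed

lemma sum_sq_le_of_inner_le:
  fixes y :: "'a \<Rightarrow> real"
  assumes bound: "\<And>v. v \<in> unit_ball_on J \<Longrightarrow> (\<Sum>l\<in>J. v l * y l) \<le> s"
  shows "(\<Sum>l\<in>J. (y l)\<^sup>2) \<le> s\<^sup>2"
proof -
  define r where "r = sqrt (\<Sum>l\<in>J. (y l)\<^sup>2)"
  have r2: "r\<^sup>2 = (\<Sum>l\<in>J. (y l)\<^sup>2)" and r0: "r \<ge> 0" by (simp_all add: r_def sum_nonneg)
  have "r \<le> s"
  proof (cases "r = 0")
    case True
    then show ?thesis using bound[of "\<lambda>_. 0"] by (simp add: unit_ball_on_def)
  next
    case False
    then have r: "r > 0" using r0 by simp
    have "r = r\<^sup>2 / r" using r by (simp add: power2_eq_square)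
    also have "\<dots> = (\<Sum>l\<in>J. (y l / r) * y l)"
      unfolding r2 by (simp add: sum_divide_distrib power2_eq_square)
    also have "\<dots> \<le> s"
      using r r2
      by (intro bound) (simp add: unit_ball_on_def power_divide sum_divide_distrib[symmetric])
    finally show ?thesis .
  qed
  then have "r\<^sup>2 \<le> s\<^sup>2" using r0 by (simp add: power_mono)
  then show ?thesis by (simp add: r2)
qed

lemma sum_sq_le_of_bilinear_le:
  fixes K :: "'a \<Rightarrow> 'b \<Rightarrow> real"
  assumes I: "finite I"
    and bound: "\<And>c v. c \<in> unit_ball_on I \<Longrightarrow> v \<in> unit_ball_on J \<Longrightarrow>
                  (\<Sum>i\<in>I. \<Sum>l\<in>J. c i * v l * K i l) \<le> s"
  shows "(\<Sum>l\<in>J. (\<Sum>i\<in>I. c i * K i l)\<^sup>2) \<le> s\<^sup>2 * (\<Sum>i\<in>I. (c i)\<^sup>2)"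
proof -
  have unit: "(\<Sum>l\<in>J. (\<Sum>i\<in>I. c i * K i l)\<^sup>2) \<le> s\<^sup>2" if c: "c \<in> unit_ball_on I" for c
  proof (rule sum_sq_le_of_inner_le)
    fix v assume "v \<in> unit_ball_on J"
    from bound[OF c this] show "(\<Sum>l\<in>J. v l * (\<Sum>i\<in>I. c i * K i l)) \<le> s"
      by (simp add: sum_distrib_left sum.swap[of _ J] mult_ac)
  qed
  define \<rho> where "\<rho> = sqrt (\<Sum>i\<in>I. (c i)\<^sup>2)"
  show ?thesis
  proof (cases "\<rho> = 0")
    case True
    then have "\<forall>i\<in>I. c i = 0" using I by (simp add: \<rho>_def sum_nonneg_eq_0_iff)
    then show ?thesis by simp
  next
    case False
    have "(\<Sum>i\<in>I. (c i)\<^sup>2) \<ge> 0" by (simp add: sum_nonneg)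
    then have \<rho>: "\<rho> > 0" "\<rho>\<^sup>2 = (\<Sum>i\<in>I. (c i)\<^sup>2)"
      using False by (simp_all add: \<rho>_def)
    have "(\<lambda>i. c i / \<rho>) \<in> unit_ball_on I"
      using \<rho> by (simp add: unit_ball_on_def power_divide sum_divide_distrib[symmetric])
    from unit[OF this] have "(\<Sum>l\<in>J. (\<Sum>i\<in>I. c i * K i l)\<^sup>2) / \<rho>\<^sup>2 \<le> s\<^sup>2"
      by (simp add: sum_divide_distrib[symmetric] power_divide)
    then have "(\<Sum>l\<in>J. (\<Sum>i\<in>I. c i * K i l)\<^sup>2) \<le> s\<^sup>2 * \<rho>\<^sup>2"
      using \<rho>(1) by (simp add: pos_divide_le_eq)
    then show ?thesis by (simp add: \<rho>(2))
  qed
qed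

section \<open>The union bound\<close>

lemma ip_mat_vec_tAA:
  "ip n (mat_vec n (tAA n A \<Omega> z0 w0) x) y =
   (\<Sum>l\<in>\<Omega>. sgn (ip n (row n A l) z0 * ip n (row n A l) w0) *
      ip n (row n A l) x * ip n (row n A l) y)"
proof -
  define s where "s l = sgn (ip n (row n A l) z0 * ip n (row n A l) w0)" for l
  have "ip n (mat_vec n (tAA n A \<Omega> z0 w0) x) y =
        (\<Sum>i<n. \<Sum>j<n. \<Sum>l\<in>\<Omega>. s l * (row n A l j * x j) * (row n A l i * y i))"
    unfolding ip_def mat_vec_def tAA_def s_def
    by (simp add: sum_distrib_left sum_distrib_right mult_ac)
  also have "\<dots> = (\<Sum>l\<in>\<Omega>. \<Sum>j<n. \<Sum>i<n. s l * (row n A l j * x j) * (row n A l i * y i))"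
    by (subst sum.swap) (simp add: sum.swap[of _ "{..<n}" \<Omega>])
  also have "\<dots> = (\<Sum>l\<in>\<Omega>. s l * ip n (row n A l) x * ip n (row n A l) y)"
    unfolding ip_def by (simp add: sum_distrib_left sum_distrib_right mult_ac)
  finally show ?thesis by (simp add: s_def)
qed

lemma tAA_form_bound:
  assumes "\<epsilon> \<ge> 0"
    and x: "(\<Sum>l\<in>\<Omega>. (ip n (row n A l) x)\<^sup>2) \<le> \<epsilon> * ip n x x"
    and y: "(\<Sum>l\<in>\<Omega>. (ip n (row n A l) y)\<^sup>2) \<le> \<epsilon> * ip n y y"
  shows "\<bar>ip n (mat_vec n (tAA n A \<Omega> z0 w0) x) y\<bar> \<le> \<epsilon> * vnorm n x * vnorm n y"
proof -
  define p where "p l = ip n (row n A l) x" for l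
  define q where "q l = ip n (row n A l) y" for l
  have "\<bar>ip n (mat_vec n (tAA n A \<Omega> z0 w0) x) y\<bar> \<le> (\<Sum>l\<in>\<Omega>. \<bar>p l\<bar> * \<bar>q l\<bar>)"
    unfolding ip_mat_vec_tAA p_def q_def
    by (rule order_trans[OF sum_abs sum_mono]) (simp add: abs_mult abs_sgn_eq mult_left_le_one_le)
  also have "\<dots> \<le> L2_set p \<Omega> * L2_set q \<Omega>" by (rule L2_set_mult_ineq)
  also have "\<dots> \<le> sqrt (\<epsilon> * ip n x x) * sqrt (\<epsilon> * ip n y y)"
    unfolding L2_set_def p_def q_def using x y assms(1) ip_self_nonneg
    by (intro mult_mono) (auto simp: sum_nonneg)
  also have "\<dots> = \<epsilon> * vnorm n x * vnorm n y"
    unfolding vnorm_def using assms(1) by (simp add: real_sqrt_mult)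
  finally show ?thesis .
qed

definition row_outer :: "nat set \<Rightarrow> (nat \<Rightarrow> real) \<Rightarrow> (nat \<Rightarrow> real) \<Rightarrow> nat \<times> nat \<Rightarrow> real" where
  "row_outer \<Omega> w x = (\<lambda>(l, j). if l \<in> \<Omega> then w l * x j else 0)"

lemma sum_row_outer_mult:
  assumes "\<Omega> \<subseteq> {..<m}"
  shows "(\<Sum>p\<in>{..<m}\<times>{..<n}. row_outer \<Omega> w x p * A p) = (\<Sum>l\<in>\<Omega>. w l * ip n (row n A l) x)"
proof -
  have "(\<Sum>p\<in>{..<m}\<times>{..<n}. row_outer \<Omega> w x p * A p) =
        (\<Sum>l<m. \<Sum>j<n. (if l \<in> \<Omega> then w l * x j else 0) * A (l, j))"
    by (simp add: sum.cartesian_product row_outer_def split_def)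
  also have "\<dots> = (\<Sum>l<m. if l \<in> \<Omega> then w l * ip n (row n A l) x else 0)"
    by (intro sum.cong) (auto simp: ip_def row_def sum_distrib_left mult_ac)
  also have "\<dots> = (\<Sum>l\<in>\<Omega>. w l * ip n (row n A l) x)"
    using assms by (simp add: sum.inter_restrict[symmetric] Int_absorb1)
  finally show ?thesis .
qed

lemma sum_row_outer_sq:
  assumes "\<Omega> \<subseteq> {..<m}"
  shows "(\<Sum>p\<in>{..<m}\<times>{..<n}. (row_outer \<Omega> w x p)\<^sup>2) = (\<Sum>l\<in>\<Omega>. (w l)\<^sup>2) * ip n x x"
proof -
  have "(\<Sum>p\<in>{..<m}\<times>{..<n}. (row_outer \<Omega> w x p)\<^sup>2) =
        (\<Sum>l<m. \<Sum>j<n. (if l \<in> \<Omega> then w l * x j else 0)\<^sup>2)"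
    by (simp add: sum.cartesian_product row_outer_def split_def)
  also have "\<dots> = (\<Sum>l<m. if l \<in> \<Omega> then (w l)\<^sup>2 * ip n x x else 0)"
    by (intro sum.cong) (auto simp: ip_def sum_distrib_left power2_eq_square mult_ac)
  also have "\<dots> = (\<Sum>l\<in>\<Omega>. (w l)\<^sup>2) * ip n x x"
    using assms by (simp add: sum.inter_restrict[symmetric] Int_absorb1 sum_distrib_right)
  finally show ?thesis .
qed

lemma sum_power_card_Pow:
  fixes x :: "'a :: comm_semiring_1"
  assumes "finite A"
  shows "(\<Sum>B\<in>Pow A. x ^ card B) = (1 + x) ^ card A"
  using assms
proof (induction A rule: finite_induct)
  case (insert a A)
  have "inj_on (insert a) (Pow A)"
  proof (rule inj_onI)
    fix X Y assume "X \<in> Pow A" "Y \<in> Pow A" "insert a X = insert a Y"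
    then show "X = Y" using insert.hyps(2) insert_ident[of a X Y] by blast
  qed
  moreover have "x ^ card (insert a B) = x * x ^ card B" if "B \<in> Pow A" for B
  proof -
    have "finite B" "a \<notin> B" using that insert.hyps finite_subset by auto
    then show ?thesis by simp
  qed
  ultimately have "(\<Sum>B\<in>insert a ` Pow A. x ^ card B) = x * (\<Sum>B\<in>Pow A. x ^ card B)"
    by (simp add: sum.reindex sum_distrib_left)
  moreover have "Pow A \<inter> insert a ` Pow A = {}" using insert.hyps(2) by auto
  ultimately show ?case
    using insert by (simp add: Pow_insert sum.union_disjoint algebra_simps)
qed simp

lemma card_subsets_card_le_bound:
  fixes d :: real
  assumes "0 \<le> d" "d \<le> 1"
  shows "card {\<Omega>. \<Omega> \<subseteq> {..<m} \<and> card \<Omega> \<le> K} * d ^ K \<le> (1 + d) ^ m"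
proof -
  let ?S = "{\<Omega>. \<Omega> \<subseteq> {..<m} \<and> card \<Omega> \<le> K}"
  have "card ?S * d ^ K = (\<Sum>\<Omega>\<in>?S. d ^ K)" by simp
  also have "\<dots> \<le> (\<Sum>\<Omega>\<in>?S. d ^ card \<Omega>)"
    using assms by (intro sum_mono power_decreasing) auto
  also have "\<dots> \<le> (\<Sum>\<Omega>\<in>Pow {..<m}. d ^ card \<Omega>)"
    using assms by (intro sum_mono2) auto
  also have "\<dots> = (1 + d) ^ m" using sum_power_card_Pow[of "{..<m}" d] by simp
  finally show ?thesis .
qed

lemma card_SIGMA_unit_ball_nets_le:
  assumes "finite I" "finite Os" "\<And>\<Omega>. \<Omega> \<in> Os \<Longrightarrow> finite \<Omega> \<and> card \<Omega> \<le> K"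
  shows "card (SIGMA \<Omega>:Os. unit_ball_net I \<times> unit_ball_net \<Omega>) \<le> card Os * 48 ^ (card I + K)"
proof -
  have "card (SIGMA \<Omega>:Os. unit_ball_net I \<times> unit_ball_net \<Omega>) =
        (\<Sum>\<Omega>\<in>Os. real (card (unit_ball_net I)) * real (card (unit_ball_net \<Omega>)))"
    using assms by (subst card_SigmaI) (auto simp: card_cartesian_product finite_unit_ball_net)
  also have "\<dots> \<le> (\<Sum>\<Omega>\<in>Os. 48 ^ card I * 48 ^ K)"
  proof (rule sum_mono)
    fix \<Omega> assume "\<Omega> \<in> Os"
    then have \<Omega>: "finite \<Omega>" "card \<Omega> \<le> K" using assms(3) by auto
    have "real (card (unit_ball_net \<Omega>)) \<le> 48 ^ card \<Omega>" by (rule card_unit_ball_net_le[OF \<Omega>(1)])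
    also have "\<dots> \<le> 48 ^ K" using \<Omega>(2) by (rule power_increasing) simp
    finally have "real (card (unit_ball_net \<Omega>)) \<le> 48 ^ K" .
    then show "real (card (unit_ball_net I)) * real (card (unit_ball_net \<Omega>)) \<le> 48 ^ card I * 48 ^ K"
      using card_unit_ball_net_le[OF assms(1)] by (intro mult_mono) auto
  qed
  finally have "real (card (SIGMA \<Omega>:Os. unit_ball_net I \<times> unit_ball_net \<Omega>)) \<le>
                real (card Os * 48 ^ (card I + K))"
    by (simp add: power_add)
  then show ?thesis by (simp only: of_nat_le_iff)
qed

lemma card_subsets_card_le_exp:
  fixes s :: real
  assumes s: "0 < s" "s \<le> 1" and K: "real K \<le> s\<^sup>2 * real m"
  shows "card {\<Omega>. \<Omega> \<subseteq> {..<m} \<and> card \<Omega> \<le> K} \<le> exp ((s\<^sup>2 + 2 * s) * m)"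
proof -
  have "card {\<Omega>. \<Omega> \<subseteq> {..<m} \<and> card \<Omega> \<le> K} * (s\<^sup>2) ^ K \<le> (1 + s\<^sup>2) ^ m"
    using s by (intro card_subsets_card_le_bound) (auto simp: power_le_one)
  also have "\<dots> \<le> exp (s\<^sup>2) ^ m"
    by (intro power_mono) (auto simp: add.commute)
  also have "\<dots> = exp (s\<^sup>2 * m)" by (simp add: exp_of_nat_mult[symmetric] mult.commute)
  also have "(s\<^sup>2) ^ K = s ^ (2 * K)" by (simp flip: power_mult)
  finally have card: "card {\<Omega>. \<Omega> \<subseteq> {..<m} \<and> card \<Omega> \<le> K} \<le> exp (s\<^sup>2 * m) * (1 / s) ^ (2 * K)"
    using s by (simp add: pos_le_divide_eq power_one_over)
  have "1 / s \<le> exp (1 / s)" using exp_ge_add_one_self[of "1 / s"] by linarith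
  then have "(1 / s) ^ (2 * K) \<le> exp (1 / s) ^ (2 * K)" using s by (intro power_mono) auto
  also have "\<dots> = exp (real (2 * K) / s)" by (simp add: exp_of_nat_mult[symmetric])
  also have "\<dots> \<le> exp (2 * s * m)"
    using K s by (simp add: pos_divide_le_eq power2_eq_square mult_ac)
  finally have "(1 / s) ^ (2 * K) \<le> exp (2 * s * m)" .
  from order_trans[OF card mult_left_mono[OF this]] show ?thesis
    by (simp add: exp_add[symmetric] algebra_simps)
qed

text \<open>With s = \<epsilon>/100 the number of events is at most exp((10 s^2 + 2 s) m), which the Gaussian
  tail exp(-\<epsilon> m/8) more than compensates.\<close>
lemma union_bound_estimate:
  fixes \<epsilon> :: real
  assumes \<epsilon>: "0 < \<epsilon>" "\<epsilon> < 1" and k: "real (2 * k) \<le> (\<epsilon> / 100)\<^sup>2 * real m" and m: "m \<ge> 1"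
  shows "card {\<Omega>. \<Omega> \<subseteq> {..<m} \<and> card \<Omega> \<le> 2 * k} * 48 ^ (3 * k) * exp (- real m * \<epsilon> / 8)
         \<le> 2 * real m * exp (- \<epsilon> * real m / 36)"
proof -
  define s where "s = \<epsilon> / 100"
  have s: "0 < s" "s \<le> 1" using \<epsilon> by (auto simp: s_def)
  have k: "real (2 * k) \<le> s\<^sup>2 * real m" using k by (simp add: s_def)
  have "(48::real) \<le> exp 1 ^ 6"
    using power_mono[OF exp_ge_add_one_self[of 1], of 6] by simp
  then have "(48::real) ^ (3 * k) \<le> exp 6 ^ (3 * k)"
    by (intro power_mono) (simp_all add: exp_of_nat_mult[symmetric])
  also have "\<dots> = exp (real (18 * k))" by (simp add: exp_of_nat_mult[symmetric])
  also have "\<dots> \<le> exp (9 * s\<^sup>2 * m)" using k by (simp add: mult.commute)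
  finally have "(48::real) ^ (3 * k) \<le> exp (9 * s\<^sup>2 * m)" .
  from mult_mono[OF card_subsets_card_le_exp[OF s k] this]
  have "card {\<Omega>. \<Omega> \<subseteq> {..<m} \<and> card \<Omega> \<le> 2 * k} * 48 ^ (3 * k) * exp (- real m * \<epsilon> / 8)
        \<le> exp ((s\<^sup>2 + 2 * s) * m) * exp (9 * s\<^sup>2 * m) * exp (- real m * \<epsilon> / 8)"
    by (intro mult_right_mono) auto
  also have "\<dots> = exp ((10 * s\<^sup>2 + 2 * s - \<epsilon> / 8) * m)"
    by (simp add: exp_add[symmetric] algebra_simps)
  also have "\<dots> \<le> exp (- \<epsilon> * real m / 36)"
  proof -
    have "s\<^sup>2 \<le> \<epsilon> / 10000" using \<epsilon> by (simp add: s_def power2_eq_square)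
    then have "10 * s\<^sup>2 + 2 * s - \<epsilon> / 8 \<le> - \<epsilon> / 36" using \<epsilon> by (simp add: s_def)
    from mult_right_mono[OF this, of "real m"] show ?thesis by simp
  qed
  also have "\<dots> \<le> 2 * real m * exp (- \<epsilon> * real m / 36)" using m by simp
  finally show ?thesis .
qed

lemma sum_sq_ip_le_of_net:
  fixes a u :: "nat \<Rightarrow> nat \<Rightarrow> real"
  assumes \<Omega>: "finite \<Omega>" and u: "orthonormal n k u"
    and net: "\<And>c w. c \<in> unit_ball_net {..<k} \<Longrightarrow> w \<in> unit_ball_net \<Omega> \<Longrightarrow>
               (\<Sum>l\<in>\<Omega>. w l * ip n (a l) (\<lambda>j. \<Sum>i<k. c i * u i j)) \<le> t"
    and z: "z \<in> lin_span k u"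
  shows "(\<Sum>l\<in>\<Omega>. (ip n (a l) z)\<^sup>2) \<le> 4 * t\<^sup>2 * ip n z z"
proof -
  define K where "K i l = ip n (a l) (u i)" for i l
  have ip_a: "ip n (a l) (\<lambda>j. \<Sum>i<k. c i * u i j) = (\<Sum>i<k. c i * K i l)" for c l
    by (simp add: K_def ip_sum_right)
  have "(\<Sum>i<k. \<Sum>l\<in>\<Omega>. c i * w l * K i l) \<le> 2 * t"
    if "c \<in> unit_ball_on {..<k}" "w \<in> unit_ball_on \<Omega>" for c w
  proof (rule bilinear_le_of_le_on_nets[OF finite_lessThan \<Omega> _ that])
    fix c w assume "c \<in> unit_ball_net {..<k}" "w \<in> unit_ball_net \<Omega>"
    from net[OF this] show "(\<Sum>i<k. \<Sum>l\<in>\<Omega>. c i * w l * K i l) \<le> t"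
      by (simp add: ip_a sum_distrib_left sum.swap[of _ \<Omega>] mult_ac)
  qed
  then have bound: "(\<Sum>l\<in>\<Omega>. (\<Sum>i<k. e i * K i l)\<^sup>2) \<le> (2 * t)\<^sup>2 * (\<Sum>i<k. (e i)\<^sup>2)" for e
    by (rule sum_sq_le_of_bilinear_le[OF finite_lessThan])
  obtain e where e: "z = (\<lambda>j. \<Sum>i<k. e i * u i j)" using z unfolding lin_span_def by blast
  show ?thesis
    using bound[of e] unfolding e ip_a ip_self_lin_comb_orthonormal[OF u]
    by (simp add: power_mult_distrib)
qed

lemma event_E_if_net_forms_bounded:
  assumes \<epsilon>: "\<epsilon> > 0" and u: "orthonormal n k' u" and T: "T \<subseteq> lin_span k' u"
    and A: "A \<in> space (gauss_mat m n)"
    and net: "\<And>\<Omega> c w. \<Omega> \<subseteq> {..<m} \<Longrightarrow> card \<Omega> \<le> 2 * k \<Longrightarrow>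
                c \<in> unit_ball_net {..<k'} \<Longrightarrow> w \<in> unit_ball_net \<Omega> \<Longrightarrow>
                (\<Sum>l\<in>\<Omega>. w l * ip n (row n A l) (\<lambda>j. \<Sum>i<k'. c i * u i j)) \<le> sqrt \<epsilon> / 2"
  shows "A \<in> event_E m n k \<epsilon> T W0 Z0"
proof -
  have "\<bar>ip n (mat_vec n (tAA n A \<Omega> z0 w0) x) y\<bar> \<le> \<epsilon> * vnorm n x * vnorm n y"
    if \<Omega>: "\<Omega> \<subseteq> {..<m}" "card \<Omega> \<le> 2 * k" and "x \<in> T" "y \<in> T" for \<Omega> x y z0 w0
  proof -
    have "(\<Sum>l\<in>\<Omega>. (ip n (row n A l) z)\<^sup>2) \<le> \<epsilon> * ip n z z" if "z \<in> T" for z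
      using sum_sq_ip_le_of_net[OF finite_subset[OF \<Omega>(1) finite_lessThan] u net[OF \<Omega>]
          subsetD[OF T that]] \<epsilon>
      by (simp add: power_divide)
    then show ?thesis using \<epsilon> \<open>x \<in> T\<close> \<open>y \<in> T\<close> by (intro tAA_form_bound) auto
  qed
  then show ?thesis using A unfolding event_E_def by blast
qed

definition net_forms :: "nat \<Rightarrow> nat \<Rightarrow> nat \<Rightarrow> (nat \<Rightarrow> nat \<Rightarrow> real) \<Rightarrow> (nat \<times> nat \<Rightarrow> real) set" where
  "net_forms m K k u = (\<lambda>(\<Omega>, c, w). row_outer \<Omega> w (\<lambda>j. \<Sum>i<k. c i * u i j)) `
     (SIGMA \<Omega>:{\<Omega>. \<Omega> \<subseteq> {..<m} \<and> card \<Omega> \<le> K}. unit_ball_net {..<k} \<times> unit_ball_net \<Omega>)"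

lemma row_outer_in_net_forms:
  assumes "\<Omega> \<subseteq> {..<m}" "card \<Omega> \<le> K" "c \<in> unit_ball_net {..<k}" "w \<in> unit_ball_net \<Omega>"
  shows "row_outer \<Omega> w (\<lambda>j. \<Sum>i<k. c i * u i j) \<in> net_forms m K k u"
  unfolding net_forms_def using assms by (intro image_eqI[of _ _ "(\<Omega>, c, w)"]) auto

lemma finite_net_forms_index:
  fixes m k :: nat
  shows "finite (SIGMA \<Omega>:{\<Omega>. \<Omega> \<subseteq> {..<m} \<and> card \<Omega> \<le> K}. unit_ball_net {..<k} \<times> unit_ball_net \<Omega>)"
proof -
  have "finite {\<Omega>. \<Omega> \<subseteq> {..<m} \<and> card \<Omega> \<le> K}"
    by (rule finite_subset[of _ "Pow {..<m}"]) auto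
  then show ?thesis
    by (intro finite_SigmaI finite_cartesian_product finite_unit_ball_net)
      (auto intro: finite_subset)
qed

lemma finite_net_forms: "finite (net_forms m K k u)"
  unfolding net_forms_def using finite_net_forms_index by (rule finite_imageI)

lemma card_net_forms_le:
  "card (net_forms m K k u) \<le> card {\<Omega>. \<Omega> \<subseteq> {..<m} \<and> card \<Omega> \<le> K} * 48 ^ (k + K)"
proof -
  let ?Os = "{\<Omega>. \<Omega> \<subseteq> {..<m} \<and> card \<Omega> \<le> K}"
  have "card (net_forms m K k u) \<le> card (SIGMA \<Omega>:?Os. unit_ball_net {..<k} \<times> unit_ball_net \<Omega>)"
    unfolding net_forms_def using finite_net_forms_index by (rule card_image_le)
  also have "\<dots> \<le> card ?Os * 48 ^ (k + K)"
  proof (rule card_SIGMA_unit_ball_nets_le[of "{..<k}", simplified])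
    show "finite ?Os" by (rule finite_subset[of _ "Pow {..<m}"]) auto
  qed (auto intro: finite_subset)
  finally show ?thesis .
qed

lemma sum_sq_net_forms_le:
  assumes u: "orthonormal n k u" and C: "C \<in> net_forms m K k u"
  shows "(\<Sum>p\<in>{..<m}\<times>{..<n}. (C p)\<^sup>2) \<le> 1"
proof -
  obtain \<Omega> c w where \<Omega>: "\<Omega> \<subseteq> {..<m}" and "c \<in> unit_ball_net {..<k}" "w \<in> unit_ball_net \<Omega>"
    and C: "C = row_outer \<Omega> w (\<lambda>j. \<Sum>i<k. c i * u i j)"
    using C unfolding net_forms_def by auto
  then have c: "c \<in> unit_ball_on {..<k}" and w: "w \<in> unit_ball_on \<Omega>"
    using unit_ball_net_subset by auto
  have "(\<Sum>p\<in>{..<m}\<times>{..<n}. (C p)\<^sup>2) = (\<Sum>l\<in>\<Omega>. (w l)\<^sup>2) * (\<Sum>i<k. (c i)\<^sup>2)"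
    by (simp add: C sum_row_outer_sq[OF \<Omega>] ip_self_lin_comb_orthonormal[OF u])
  also have "\<dots> \<le> 1 * 1"
    using c w by (intro mult_mono) (auto simp: unit_ball_on_def sum_nonneg)
  finally show ?thesis by simp
qed

lemma gauss_mat_net_forms_bounded:
  fixes u :: "nat \<Rightarrow> nat \<Rightarrow> real"
  assumes m: "m > 0" and u: "orthonormal n k' u" and k': "k' \<le> k" and t: "t > 0"
  obtains G where "G \<in> sets (gauss_mat m n)" "G \<subseteq> space (gauss_mat m n)"
    and "\<And>A \<Omega> c w. A \<in> G \<Longrightarrow> \<Omega> \<subseteq> {..<m} \<Longrightarrow> card \<Omega> \<le> 2 * k \<Longrightarrow>
           c \<in> unit_ball_net {..<k'} \<Longrightarrow> w \<in> unit_ball_net \<Omega> \<Longrightarrow>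
           (\<Sum>l\<in>\<Omega>. w l * ip n (row n A l) (\<lambda>j. \<Sum>i<k'. c i * u i j)) < t"
    and "measure (gauss_mat m n) G \<ge>
           1 - card {\<Omega>. \<Omega> \<subseteq> {..<m} \<and> card \<Omega> \<le> 2 * k} * 48 ^ (3 * k) * exp (- real m * t\<^sup>2 / 2)"
proof -
  define F where "F = net_forms m (2 * k) k' u"
  define B where "B = {A \<in> space (gauss_mat m n). \<exists>C\<in>F. t \<le> (\<Sum>p\<in>{..<m}\<times>{..<n}. C p * A p)}"
  interpret prob_space "gauss_mat m n" by (rule prob_space_gauss_mat)
  have F: "finite F" "\<forall>C\<in>F. (\<Sum>p\<in>{..<m}\<times>{..<n}. (C p)\<^sup>2) \<le> 1"
    unfolding F_def using finite_net_forms sum_sq_net_forms_le[OF u] by blast+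
  have B: "B \<in> sets (gauss_mat m n)" "measure (gauss_mat m n) B \<le> card F * exp (- real m * t\<^sup>2 / 2)"
    unfolding B_def by (rule gauss_mat_finite_linear_forms_tail[OF m F(1) t F(2)])+
  let ?Os = "{\<Omega>. \<Omega> \<subseteq> {..<m} \<and> card \<Omega> \<le> 2 * k}"
  have "card F \<le> card ?Os * 48 ^ (k' + 2 * k)" unfolding F_def by (rule card_net_forms_le)
  also have "\<dots> \<le> card ?Os * 48 ^ (3 * k)" using k' by (intro mult_le_mono2 power_increasing) auto
  finally have "real (card F) \<le> real (card ?Os * 48 ^ (3 * k))" by (simp only: of_nat_le_iff)
  then have "measure (gauss_mat m n) B \<le> card ?Os * 48 ^ (3 * k) * exp (- real m * t\<^sup>2 / 2)"
    by (rule order_trans[OF B(2) mult_right_mono[OF _ exp_ge_zero]])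
  then have measure: "measure (gauss_mat m n) (space (gauss_mat m n) - B) \<ge>
      1 - card ?Os * 48 ^ (3 * k) * exp (- real m * t\<^sup>2 / 2)"
    using prob_compl[OF B(1)] by simp
  have net: "(\<Sum>l\<in>\<Omega>. w l * ip n (row n A l) (\<lambda>j. \<Sum>i<k'. c i * u i j)) < t"
    if "A \<in> space (gauss_mat m n) - B" "\<Omega> \<subseteq> {..<m}" "card \<Omega> \<le> 2 * k"
      "c \<in> unit_ball_net {..<k'}" "w \<in> unit_ball_net \<Omega>" for A \<Omega> c w
  proof -
    have "\<not> t \<le> (\<Sum>p\<in>{..<m}\<times>{..<n}. row_outer \<Omega> w (\<lambda>j. \<Sum>i<k'. c i * u i j) p * A p)"
      using that(1) row_outer_in_net_forms[OF that(2-5), of u] unfolding B_def F_def by blast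
    then show ?thesis by (simp add: sum_row_outer_mult[OF that(2)] not_le)
  qed
  show ?thesis
  proof (rule that[of "space (gauss_mat m n) - B", OF _ _ net measure])
    show "space (gauss_mat m n) - B \<in> sets (gauss_mat m n)" using B(1) by auto
  qed auto
qed

lemma gauss_mat_event_E_large:
  assumes m: "m > 0" and \<epsilon>: "\<epsilon> > 0"
    and u: "orthonormal n k' u" and k': "k' \<le> k" and T: "T \<subseteq> lin_span k' u"
  shows "\<exists>E'\<in>sets (gauss_mat m n). E' \<subseteq> event_E m n k \<epsilon> T W0 Z0 \<and>
           measure (gauss_mat m n) E' \<ge>
             1 - card {\<Omega>. \<Omega> \<subseteq> {..<m} \<and> card \<Omega> \<le> 2 * k} * 48 ^ (3 * k) * exp (- real m * \<epsilon> / 8)"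
proof -
  have t: "sqrt \<epsilon> / 2 > 0" and tail: "- real m * (sqrt \<epsilon> / 2)\<^sup>2 / 2 = - real m * \<epsilon> / 8"
    using \<epsilon> by (simp_all add: power_divide)
  show ?thesis
  proof (rule gauss_mat_net_forms_bounded[OF m u k' t])
    fix G assume G: "G \<in> sets (gauss_mat m n)" "G \<subseteq> space (gauss_mat m n)"
      and net: "\<And>A \<Omega> c w. A \<in> G \<Longrightarrow> \<Omega> \<subseteq> {..<m} \<Longrightarrow> card \<Omega> \<le> 2 * k \<Longrightarrow>
              c \<in> unit_ball_net {..<k'} \<Longrightarrow> w \<in> unit_ball_net \<Omega> \<Longrightarrow>
              (\<Sum>l\<in>\<Omega>. w l * ip n (row n A l) (\<lambda>j. \<Sum>i<k'. c i * u i j)) < sqrt \<epsilon> / 2"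
      and "measure (gauss_mat m n) G \<ge> 1 - card {\<Omega>. \<Omega> \<subseteq> {..<m} \<and> card \<Omega> \<le> 2 * k} *
             48 ^ (3 * k) * exp (- real m * (sqrt \<epsilon> / 2)\<^sup>2 / 2)"
    have "G \<subseteq> event_E m n k \<epsilon> T W0 Z0"
    proof
      fix A assume "A \<in> G"
      show "A \<in> event_E m n k \<epsilon> T W0 Z0"
      proof (rule event_E_if_net_forms_bounded[OF \<epsilon> u T])
        show "A \<in> space (gauss_mat m n)" using \<open>A \<in> G\<close> G(2) by blast
      qed (use net[OF \<open>A \<in> G\<close>] in \<open>simp add: less_imp_le\<close>)
    qed
    with G(1) \<open>measure (gauss_mat m n) G \<ge> _\<close> show ?thesis unfolding tail by blast
  qed
qed

theorem lemma26:
  fixes \<epsilon> :: real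
  assumes "0 < \<epsilon>" "\<epsilon> < 1"
  shows "\<exists>\<delta>>0. \<forall>(m::nat) (n::nat) (k::nat) T W0 Z0.
           k < m \<longrightarrow> subspace_of_dim n k T \<longrightarrow> W0 \<subseteq> Rn n \<longrightarrow> Z0 \<subseteq> Rn n \<longrightarrow>
           real m \<ge> 9 * real k / \<epsilon> \<longrightarrow> real (2 * k) \<le> \<delta> * real m \<longrightarrow>
           (\<exists>E'\<in>sets (gauss_mat m n). E' \<subseteq> event_E m n k \<epsilon> T W0 Z0 \<and>
              measure (gauss_mat m n) E' \<ge> 1 - 2 * real m * exp (- \<epsilon> * real m / 36))"
proof (intro exI[of _ "(\<epsilon> / 100)\<^sup>2"] conjI allI impI)
  show "(\<epsilon> / 100)\<^sup>2 > 0" using assms by simp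
next
  fix m n k :: nat and T W0 Z0 :: "(nat \<Rightarrow> real) set"
  assume "k < m" and T: "subspace_of_dim n k T" and "W0 \<subseteq> Rn n" "Z0 \<subseteq> Rn n"
    and "real m \<ge> 9 * real k / \<epsilon>" and k: "real (2 * k) \<le> (\<epsilon> / 100)\<^sup>2 * real m"
  then have m: "m > 0" by simp
  obtain k' u where "k' \<le> k" "orthonormal n k' u" "T \<subseteq> lin_span k' u"
    using subspace_of_dim_orthonormal[OF T] .
  from gauss_mat_event_E_large[OF m assms(1) this(2,1,3)]
  obtain E' where "E' \<in> sets (gauss_mat m n)" "E' \<subseteq> event_E m n k \<epsilon> T W0 Z0"
    and "measure (gauss_mat m n) E' \<ge>
           1 - card {\<Omega>. \<Omega> \<subseteq> {..<m} \<and> card \<Omega> \<le> 2 * k} * 48 ^ (3 * k) * exp (- real m * \<epsilon> / 8)"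
    by blast
  with union_bound_estimate[OF assms k] m
  show "\<exists>E'\<in>sets (gauss_mat m n). E' \<subseteq> event_E m n k \<epsilon> T W0 Z0 \<and>
          measure (gauss_mat m n) E' \<ge> 1 - 2 * real m * exp (- \<epsilon> * real m / 36)"
    by (intro bexI[of _ E'] conjI) auto
qed

end
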